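(* Let $F$ be a field with valuation $v:F\to\mathbb{R}\cup\{\infty\}$ whose value group $v(F\setminus\{0\})$ is a proper dense subgroup of $\mathbb{R}$, and let $R=\{x\in F:v(x)\ge0\}$. Let $\alpha\in\mathbb{R}_{\ge0}$ with $\alpha\notin v(R\setminus\{0\})$, let $(\alpha_n)_{n\in\mathbb{N}}$ be a sequence in $v(R\setminus\{0\})$ with $\alpha_n\ge\alpha_{n+1}>\alpha$ for all $n$ and $\alpha_n\to\alpha$, choose $r_n\in R$ with $v(r_n)=\alpha_n$, put $f=\sum_n r_nX^n\in R[[X]]$, and let $r\in R$ with $v(r)>\alpha$. Then the finitely generated ideal $J=R[[X]]f+R[[X]]r$ of $R[[X]]$ is not finitely presented. In particular $R[[X]]$ is not a coherent ring.
   Context: A ring is coherent if every finitely generated ideal is finitely presented, i.e. admits an exact sequence $S^m\to S^n\to J\to0$ with $m,n\in\mathbb{N}$. *)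

theory Defs
  imports "HOL-Analysis.Analysis" "HOL-Computational_Algebra.Formal_Power_Series"
begin

definition is_valuation :: "('a::field \<Rightarrow> ereal) \<Rightarrow> bool" where
  "is_valuation v \<longleftrightarrow>
     (\<forall>x. v x = \<infinity> \<longleftrightarrow> x = 0) \<and> (\<forall>x. v x \<noteq> -\<infinity>) \<and>
     (\<forall>x y. v (x * y) = v x + v y) \<and>
     (\<forall>x y. min (v x) (v y) \<le> v (x + y))"

definition value_group :: "('a::field \<Rightarrow> ereal) \<Rightarrow> real set" where
  "value_group v = {real_of_ereal (v x) | x. x \<noteq> 0}"

definition dense_in_reals :: "real set \<Rightarrow> bool" where
  "dense_in_reals G \<longleftrightarrow> (\<forall>a b. a < b \<longrightarrow> (\<exists>g\<in>G. a < g \<and> g < b))"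

definition val_ring :: "('a::field \<Rightarrow> ereal) \<Rightarrow> 'a set" where
  "val_ring v = {x. 0 \<le> v x}"

definition fps_ring :: "'a::comm_ring_1 set \<Rightarrow> 'a fps set" where
  "fps_ring R = {g. \<forall>n. fps_nth g n \<in> R}"

text \<open>Module-theoretic notions over a commutative ring given as a subring S of an
  ambient commutative ring type. Elements of S^n are functions nat \<Rightarrow> 'b with
  entries in S on {..<n}.\<close>

definition span_in :: "'b::comm_ring_1 set \<Rightarrow> nat \<Rightarrow> (nat \<Rightarrow> 'b) \<Rightarrow> 'b set" where
  "span_in S n g = {(\<Sum>i<n. c i * g i) | c. \<forall>i<n. c i \<in> S}"

definition fin_gen_ideal :: "'b::comm_ring_1 set \<Rightarrow> 'b set \<Rightarrow> bool" where
  "fin_gen_ideal S J \<longleftrightarrow> (\<exists>n g. (\<forall>i<n. g i \<in> S) \<and> J = span_in S n g)"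

text \<open>J is finitely presented: there is an exact sequence S^m \<rightarrow> S^n \<rightarrow> J \<rightarrow> 0.
  The map S^n \<rightarrow> J sends e_i to g_i (surjectivity: the g_i generate J), and
  S^m \<rightarrow> S^n sends e_j to k_j; exactness at S^n says its image is the kernel.\<close>
definition finitely_presented_ideal :: "'b::comm_ring_1 set \<Rightarrow> 'b set \<Rightarrow> bool" where
  "finitely_presented_ideal S J \<longleftrightarrow>
    (\<exists>n g. (\<forall>i<n. g i \<in> S) \<and> J = span_in S n g \<and>
      (\<exists>m (k :: nat \<Rightarrow> nat \<Rightarrow> 'b). (\<forall>j<m. \<forall>i<n. k j i \<in> S) \<and>
         {c :: nat \<Rightarrow> 'b. (\<forall>i<n. c i \<in> S) \<and> (\<forall>i\<ge>n. c i = 0) \<and> (\<Sum>i<n. c i * g i) = 0}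
         = {(\<lambda>i. if i < n then (\<Sum>j<m. d j * k j i) else 0) | d :: nat \<Rightarrow> 'b. \<forall>j<m. d j \<in> S}))"

definition coherent_ring :: "'b::comm_ring_1 set \<Rightarrow> bool" where
  "coherent_ring S \<longleftrightarrow> (\<forall>J. fin_gen_ideal S J \<longrightarrow> finitely_presented_ideal S J)"

end

(*
  If J = R[[X]] f + R[[X]] r were finitely presented, Schanuel's argument would make the colon
  ideal (r : f) = {a. a f \<in> r R[[X]]} finitely generated.  A Newton polygon estimate shows
  v(r) \<le> v(a_0) + v(r_n) for every a in (r : f) and every n, so v(a_0) \<ge> v(r) - \<alpha>, and the
  inequality is strict because \<alpha> is not a value of R.  Finitely many generators therefore leave
  a gap above v(r) - \<alpha>; by density some v(x) lies in it.  Since v(x) + \<alpha>_n > v(r), the constant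
  series x lies in (r : f), yet its constant coefficient has smaller value than every
  R-combination of the constant coefficients of the generators.
*)
theory Submission
  imports Defs
begin

section \<open>Subrings and colon ideals\<close>

definition colon_ideal :: "'b::comm_ring_1 set \<Rightarrow> 'b \<Rightarrow> 'b \<Rightarrow> 'b set" where
  "colon_ideal S r f = {a \<in> S. \<exists>b\<in>S. a * f = b * r}"

locale subring =
  fixes S :: "'b::comm_ring_1 set"
  assumes zero_mem [simp]: "0 \<in> S" and one_mem [simp]: "1 \<in> S"
    and uminus_mem [intro]: "x \<in> S \<Longrightarrow> - x \<in> S"
    and add_mem [intro]: "x \<in> S \<Longrightarrow> y \<in> S \<Longrightarrow> x + y \<in> S"
    and mult_mem [intro]: "x \<in> S \<Longrightarrow> y \<in> S \<Longrightarrow> x * y \<in> S"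
begin

lemma diff_mem [intro]: "x \<in> S \<Longrightarrow> y \<in> S \<Longrightarrow> x - y \<in> S"
  unfolding diff_conv_add_uminus by (intro add_mem uminus_mem)

lemma sum_mem [intro]: "(\<And>i. i \<in> A \<Longrightarrow> F i \<in> S) \<Longrightarrow> sum F A \<in> S"
  by (induction A rule: infinite_finite_induct) auto

lemma span_in_generator: "i < n \<Longrightarrow> g i \<in> span_in S n g"
  unfolding span_in_def by (intro CollectI exI[of _ "\<lambda>j. of_bool (j = i)"]) auto

lemma fin_gen_ideal_two_generators:
  assumes "f \<in> S" "r \<in> S"
  shows "fin_gen_ideal S {x * f + y * r | x y. x \<in> S \<and> y \<in> S}"
proof -
  define g where "g i = (if i = 0 then f else r)" for i :: nat
  have two: "(\<Sum>i<2. c i * g i) = c 0 * f + c 1 * r" for c :: "nat \<Rightarrow> 'b"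
    by (simp add: g_def numeral_2_eq_2)
  have "{x * f + y * r | x y. x \<in> S \<and> y \<in> S} = span_in S 2 g"
  proof (intro set_eqI iffI)
    fix z assume "z \<in> {x * f + y * r | x y. x \<in> S \<and> y \<in> S}"
    then obtain x y where "x \<in> S" "y \<in> S" "z = x * f + y * r" by blast
    then show "z \<in> span_in S 2 g"
      unfolding span_in_def two by (intro CollectI exI[of _ "\<lambda>i. if i = 0 then x else y"]) auto
  next
    fix z assume "z \<in> span_in S 2 g"
    then obtain c :: "nat \<Rightarrow> 'b" where "\<forall>i<2. c i \<in> S" "z = c 0 * f + c 1 * r"
      unfolding span_in_def two by blast
    moreover from this(1) have "c 0 \<in> S" "c 1 \<in> S" by auto
    ultimately show "z \<in> {x * f + y * r | x y. x \<in> S \<and> y \<in> S}" by blast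
  qed
  moreover have "\<forall>i<2. g i \<in> S" using assms by (simp add: g_def)
  ultimately show ?thesis unfolding fin_gen_ideal_def by blast
qed

lemma span_in_subset_colon_ideal:
  assumes "\<And>j. j < M \<Longrightarrow> h j \<in> colon_ideal S r f"
  shows "span_in S M h \<subseteq> colon_ideal S r f"
proof
  fix a assume "a \<in> span_in S M h"
  then obtain s where s: "\<forall>j<M. s j \<in> S" and a: "a = (\<Sum>j<M. s j * h j)"
    unfolding span_in_def by blast
  have "\<forall>j. \<exists>b. j < M \<longrightarrow> b \<in> S \<and> h j * f = b * r"
    using assms unfolding colon_ideal_def by blast
  from choice[OF this] obtain b where b: "\<And>j. j < M \<Longrightarrow> b j \<in> S \<and> h j * f = b j * r"
    by blast
  have "a * f = (\<Sum>j<M. s j * b j) * r"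
    unfolding a sum_distrib_right by (intro sum.cong) (auto simp: b mult.assoc)
  moreover have "h j \<in> S" if "j < M" for j
    using assms[OF that] unfolding colon_ideal_def by blast
  then have "a \<in> S" "(\<Sum>j<M. s j * b j) \<in> S"
    unfolding a by (intro sum_mem mult_mem; use s b in simp)+
  ultimately show "a \<in> colon_ideal S r f" unfolding colon_ideal_def by blast
qed

end

section \<open>Schanuel's argument for an ideal with two generators\<close>

locale two_generator_presentation = subring S for S :: "'b::comm_ring_1 set" +
  fixes f r :: 'b and n m :: nat and g u w p q :: "nat \<Rightarrow> 'b" and k :: "nat \<Rightarrow> nat \<Rightarrow> 'b"
  assumes coeffs_mem: "\<And>i. i < n \<Longrightarrow> u i \<in> S \<and> w i \<in> S \<and> p i \<in> S \<and> q i \<in> S"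
    and relations_mem: "\<And>j i. j < m \<Longrightarrow> i < n \<Longrightarrow> k j i \<in> S"
    and f_eq: "f = (\<Sum>i<n. u i * g i)" and r_eq: "r = (\<Sum>i<n. w i * g i)"
    and g_eq: "\<And>i. i < n \<Longrightarrow> g i = p i * f + q i * r"
    and relation: "\<And>j. j < m \<Longrightarrow> (\<Sum>i<n. k j i * g i) = 0"
    and relations_generate: "\<And>c. (\<And>i. i < n \<Longrightarrow> c i \<in> S) \<Longrightarrow> (\<Sum>i<n. c i * g i) = 0 \<Longrightarrow>
         \<exists>d. (\<forall>j<m. d j \<in> S) \<and> (\<forall>i<n. c i = (\<Sum>j<m. d j * k j i))"
begin

lemma sum_generators_eq:
  fixes c :: "nat \<Rightarrow> 'b"
  shows "(\<Sum>i<n. c i * g i) = (\<Sum>i<n. c i * p i) * f + (\<Sum>i<n. c i * q i) * r"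
proof -
  have "(\<Sum>i<n. c i * g i) = (\<Sum>i<n. c i * p i * f + c i * q i * r)"
    by (rule sum.cong) (auto simp: g_eq algebra_simps)
  then show ?thesis by (simp add: sum.distrib sum_distrib_right)
qed

lemma sum_coeffs_mem: "(\<And>i. i < n \<Longrightarrow> c i \<in> S) \<Longrightarrow> (\<Sum>i<n. c i * p i) \<in> S \<and> (\<Sum>i<n. c i * q i) \<in> S"
  using coeffs_mem by auto

text \<open>First coordinates of the relations of \<open>(f, r)\<close> obtained by substituting \<open>g = p f + q r\<close>
  into the relations \<open>k\<close> and into \<open>f = \<Sum> u g\<close> and \<open>r = \<Sum> w g\<close>.\<close>

definition colon_gen :: "nat \<Rightarrow> 'b" where
  "colon_gen j = (if j < m then \<Sum>i<n. k j i * p i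
     else if j = m then 1 - (\<Sum>i<n. u i * p i) else \<Sum>i<n. w i * p i)"

lemma colon_gen_mem: "j < m + 2 \<Longrightarrow> colon_gen j \<in> colon_ideal S r f"
proof -
  assume j: "j < m + 2"
  have u: "(\<Sum>i<n. u i * p i) \<in> S \<and> (\<Sum>i<n. u i * q i) \<in> S"
    and w: "(\<Sum>i<n. w i * p i) \<in> S \<and> (\<Sum>i<n. w i * q i) \<in> S"
    using sum_coeffs_mem coeffs_mem by blast+
  consider "j < m" | "j = m" | "j = Suc m" using j by linarith
  then show ?thesis
  proof cases
    case 1
    have kS: "(\<Sum>i<n. k j i * p i) \<in> S \<and> (\<Sum>i<n. k j i * q i) \<in> S"
      using sum_coeffs_mem relations_mem 1 by blast
    have "(\<Sum>i<n. k j i * p i) * f = (- (\<Sum>i<n. k j i * q i)) * r"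
      using relation[OF 1] sum_generators_eq[of "k j"] by (simp add: add_eq_0_iff2)
    moreover have "- (\<Sum>i<n. k j i * q i) \<in> S" using kS by blast
    ultimately have "\<exists>b\<in>S. (\<Sum>i<n. k j i * p i) * f = b * r" by blast
    then show ?thesis using 1 kS unfolding colon_ideal_def colon_gen_def by simp
  next
    case 2
    have "(1 - (\<Sum>i<n. u i * p i)) * f = (\<Sum>i<n. u i * q i) * r"
      using sum_generators_eq[of u] f_eq by (simp add: algebra_simps)
    then show ?thesis using 2 u unfolding colon_ideal_def colon_gen_def by auto
  next
    case 3
    have "(\<Sum>i<n. w i * p i) * f = (1 - (\<Sum>i<n. w i * q i)) * r"
      using sum_generators_eq[of w] r_eq by (simp add: algebra_simps)
    moreover have "1 - (\<Sum>i<n. w i * q i) \<in> S" using w diff_mem one_mem by blast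
    ultimately have "\<exists>b\<in>S. (\<Sum>i<n. w i * p i) * f = b * r" by blast
    then show ?thesis using 3 w unfolding colon_ideal_def colon_gen_def by simp
  qed
qed

lemma colon_ideal_subset_span_in: "colon_ideal S r f \<subseteq> span_in S (m + 2) colon_gen"
proof
  fix a assume "a \<in> colon_ideal S r f"
  then obtain b where a: "a \<in> S" and b: "b \<in> S" and ab: "a * f = b * r"
    unfolding colon_ideal_def by blast
  define c where "c i = a * u i - b * w i" for i
  have "(\<Sum>i<n. c i * g i) = a * f - b * r"
    by (simp add: c_def f_eq r_eq sum_distrib_left sum_subtractf algebra_simps)
  then obtain d where d: "\<forall>j<m. d j \<in> S" and cd: "\<forall>i<n. c i = (\<Sum>j<m. d j * k j i)"
    using relations_generate[of c] a b coeffs_mem ab by (auto simp: c_def)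
  have "(\<Sum>j<m. d j * colon_gen j) = (\<Sum>i<n. (\<Sum>j<m. d j * k j i) * p i)"
    by (simp add: colon_gen_def sum_distrib_left sum_distrib_right mult.assoc sum.swap[of _ "{..<m}"])
  also have "\<dots> = (\<Sum>i<n. c i * p i)" using cd by simp
  also have "\<dots> = a * (\<Sum>i<n. u i * p i) - b * (\<Sum>i<n. w i * p i)"
    by (simp add: c_def sum_distrib_left sum_subtractf algebra_simps)
  finally have "a = (\<Sum>j<m. d j * colon_gen j) + a * colon_gen m + b * colon_gen (Suc m)"
    by (simp add: colon_gen_def algebra_simps)
  moreover define s where "s j = (if j < m then d j else if j = m then a else b)" for j
  ultimately have "a = (\<Sum>j<m + 2. s j * colon_gen j)"
    by (simp add: s_def)
  moreover have "\<forall>j<m + 2. s j \<in> S" using a b d by (simp add: s_def)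
  ultimately show "a \<in> span_in S (m + 2) colon_gen"
    unfolding span_in_def by blast
qed

lemma colon_ideal_eq_span_in: "colon_ideal S r f = span_in S (m + 2) colon_gen"
  using colon_ideal_subset_span_in span_in_subset_colon_ideal colon_gen_mem by blast

end

lemma (in subring) relations_if_kernel_eq:
  fixes g :: "nat \<Rightarrow> 'b" and k :: "nat \<Rightarrow> nat \<Rightarrow> 'b"
  assumes ker: "{c. (\<forall>i<n. c i \<in> S) \<and> (\<forall>i\<ge>n. c i = 0) \<and> (\<Sum>i<n. c i * g i) = 0}
      = {(\<lambda>i. if i < n then (\<Sum>j<m. d j * k j i) else 0) | d. \<forall>j<m. d j \<in> S}"
  shows "\<And>j. j < m \<Longrightarrow> (\<Sum>i<n. k j i * g i) = 0"
    and "\<And>c. (\<And>i. i < n \<Longrightarrow> c i \<in> S) \<Longrightarrow> (\<Sum>i<n. c i * g i) = 0 \<Longrightarrow>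
      \<exists>d. (\<forall>j<m. d j \<in> S) \<and> (\<forall>i<n. c i = (\<Sum>j<m. d j * k j i))"
proof -
  fix j assume "j < m"
  have "(\<lambda>i. if i < n then \<Sum>j'<m. of_bool (j' = j) * k j' i else 0) \<in>
      {c. (\<forall>i<n. c i \<in> S) \<and> (\<forall>i\<ge>n. c i = 0) \<and> (\<Sum>i<n. c i * g i) = 0}"
    unfolding ker by (rule CollectI, rule exI[of _ "\<lambda>j'. of_bool (j' = j)"]) simp
  then show "(\<Sum>i<n. k j i * g i) = 0" using \<open>j < m\<close> by simp
next
  fix c :: "nat \<Rightarrow> 'b"
  assume "\<And>i. i < n \<Longrightarrow> c i \<in> S" "(\<Sum>i<n. c i * g i) = 0"
  then have "(\<lambda>i. if i < n then c i else 0) \<in>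
      {c. (\<forall>i<n. c i \<in> S) \<and> (\<forall>i\<ge>n. c i = 0) \<and> (\<Sum>i<n. c i * g i) = 0}"
    by simp
  then obtain d where d: "\<forall>j<m. d j \<in> S"
    and cd: "(\<lambda>i. if i < n then c i else 0) = (\<lambda>i. if i < n then \<Sum>j<m. d j * k j i else 0)"
    unfolding ker by blast
  have "c i = (\<Sum>j<m. d j * k j i)" if "i < n" for i
    using fun_cong[OF cd, of i] that by simp
  then show "\<exists>d. (\<forall>j<m. d j \<in> S) \<and> (\<forall>i<n. c i = (\<Sum>j<m. d j * k j i))" using d by blast
qed

lemma (in subring) fin_gen_colon_ideal_if_finitely_presented:
  assumes f: "f \<in> S" and r: "r \<in> S"
    and fp: "finitely_presented_ideal S {x * f + y * r | x y. x \<in> S \<and> y \<in> S}"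
  shows "fin_gen_ideal S (colon_ideal S r f)"
proof -
  obtain n g m and k :: "nat \<Rightarrow> nat \<Rightarrow> 'b" where J: "{x * f + y * r | x y. x \<in> S \<and> y \<in> S} = span_in S n g"
    and k: "\<forall>j<m. \<forall>i<n. k j i \<in> S"
    and ker: "{c. (\<forall>i<n. c i \<in> S) \<and> (\<forall>i\<ge>n. c i = 0) \<and> (\<Sum>i<n. c i * g i) = 0}
      = {(\<lambda>i. if i < n then (\<Sum>j<m. d j * k j i) else 0) | d. \<forall>j<m. d j \<in> S}"
    using fp unfolding finitely_presented_ideal_def by blast
  have "f \<in> span_in S n g" "r \<in> span_in S n g"
    unfolding J[symmetric] using f r by (force intro: exI[of _ 1] exI[of _ 0])+
  then obtain u w where u: "\<forall>i<n. u i \<in> S" "f = (\<Sum>i<n. u i * g i)"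
    and w: "\<forall>i<n. w i \<in> S" "r = (\<Sum>i<n. w i * g i)"
    unfolding span_in_def by blast
  have "\<forall>i. \<exists>pq. i < n \<longrightarrow> fst pq \<in> S \<and> snd pq \<in> S \<and> g i = fst pq * f + snd pq * r"
    using span_in_generator[of _ n g] unfolding J[symmetric] by fastforce
  from choice[OF this] obtain pq
    where pq: "\<forall>i<n. fst (pq i) \<in> S \<and> snd (pq i) \<in> S \<and> g i = fst (pq i) * f + snd (pq i) * r"
    by blast
  interpret two_generator_presentation S f r n m g u w "\<lambda>i. fst (pq i)" "\<lambda>i. snd (pq i)" k
    by unfold_locales (use u w pq k relations_if_kernel_eq[OF ker] in blast)+
  show ?thesis
    unfolding fin_gen_ideal_def colon_ideal_eq_span_in
    using colon_gen_mem unfolding colon_ideal_def by blast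
qed

lemma (in subring) subring_fps_ring: "subring (fps_ring S)"
  by unfold_locales (auto simp: fps_ring_def fps_mult_nth)

lemma (in subring) fps_const_mem_fps_ring: "c \<in> S \<Longrightarrow> fps_const c \<in> fps_ring S"
  by (simp add: fps_ring_def)

section \<open>Valuations and Newton polygons\<close>

lemma exists_least_minimizer:
  fixes \<phi> :: "nat \<Rightarrow> 'b::linorder"
  assumes "finite {i. \<phi> i \<le> \<phi> i0}"
  obtains k where "\<And>i. \<phi> k \<le> \<phi> i" and "\<And>i. i < k \<Longrightarrow> \<phi> k < \<phi> i"
proof -
  let ?T = "{i. \<phi> i \<le> \<phi> i0}"
  have "Min (\<phi> ` ?T) \<in> \<phi> ` ?T" using assms by (intro Min_in) auto
  then obtain k0 where "k0 \<in> ?T" and "\<phi> k0 = Min (\<phi> ` ?T)" by auto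
  have k0: "\<forall>i. \<phi> k0 \<le> \<phi> i"
  proof
    fix i
    show "\<phi> k0 \<le> \<phi> i"
    proof (cases "i \<in> ?T")
      case True
      then show ?thesis using \<open>\<phi> k0 = Min (\<phi> ` ?T)\<close> assms by simp
    next
      case False
      then show ?thesis using \<open>k0 \<in> ?T\<close> by simp
    qed
  qed
  define k where "k = (LEAST k. \<forall>i. \<phi> k \<le> \<phi> i)"
  have min: "\<forall>i. \<phi> k \<le> \<phi> i"
    unfolding k_def by (rule LeastI[of _ k0]) (rule k0)
  have "\<phi> k < \<phi> i" if "i < k" for i
  proof -
    have "\<not> (\<forall>j. \<phi> i \<le> \<phi> j)" using not_less_Least[of i] that unfolding k_def by blast
    then show ?thesis using min by (meson le_less_trans not_le)
  qed
  then show thesis using that min by blast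
qed

lemma finite_nat_linear_le:
  fixes s c :: real
  assumes "0 < s"
  shows "finite {i :: nat. s * real i \<le> c}"
proof (rule finite_subset)
  show "{i :: nat. s * real i \<le> c} \<subseteq> {..nat \<lceil>c / s\<rceil>}"
  proof
    fix i assume "i \<in> {i :: nat. s * real i \<le> c}"
    then have "real i \<le> c / s" using assms by (simp add: pos_le_divide_eq mult.commute)
    then have "real i \<le> \<lceil>c / s\<rceil>" by (meson le_of_int_ceiling order_trans)
    then show "i \<in> {..nat \<lceil>c / s\<rceil>}" by (simp add: le_nat_iff)
  qed
qed simp

lemma ereal_between_finite:
  fixes x :: ereal
  assumes "finite A" "x < \<infinity>" "\<And>y. y \<in> A \<Longrightarrow> x < y"
  obtains z where "x < ereal z" "\<And>y. y \<in> A \<Longrightarrow> ereal z \<le> y"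
proof -
  have "x < Min (insert \<infinity> A)" using assms by simp
  then obtain z where "x < ereal z" "ereal z < Min (insert \<infinity> A)" using ereal_dense2 by blast
  moreover have "Min (insert \<infinity> A) \<le> y" if "y \<in> A" for y using assms(1) that by simp
  ultimately show thesis using that by (meson less_imp_le order_trans)
qed

lemma ereal_add_less_le_mono:
  fixes a b c d :: ereal
  assumes "a < b" "c \<le> d" "\<bar>a\<bar> \<noteq> \<infinity>" "\<bar>c\<bar> \<noteq> \<infinity>"
  shows "a + c < b + d"
  using assms by (cases a; cases b; cases c; cases d) auto

locale valuation =
  fixes v :: "'a::field \<Rightarrow> ereal"
  assumes is_valuation: "is_valuation v"
begin

lemma v_eq_infinity_iff [simp]: "v x = \<infinity> \<longleftrightarrow> x = 0"
  and v_neq_minus_infinity [simp]: "v x \<noteq> -\<infinity>"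
  and v_mult: "v (x * y) = v x + v y"
  and v_add: "min (v x) (v y) \<le> v (x + y)"
  using is_valuation unfolding is_valuation_def by auto

lemma v_zero [simp]: "v 0 = \<infinity>"
  by simp

lemma ereal_real_v: "x \<noteq> 0 \<Longrightarrow> ereal (real_of_ereal (v x)) = v x"
  by (cases "v x") auto

lemma v_one [simp]: "v 1 = 0"
  using v_mult[of 1 1] by (cases "v 1") auto

lemma v_uminus [simp]: "v (- x) = v x"
proof -
  have "v (-1) = 0" using v_mult[of "-1" "-1"] by (cases "v (-1)") auto
  then show ?thesis using v_mult[of "-1" x] by simp
qed

lemma v_add_eq_left: "v x < v y \<Longrightarrow> v (x + y) = v x"
  using v_add[of x y] v_add[of "x + y" "- y"] by (auto simp: min_def split: if_splits)

lemma v_sum_ge: "(\<And>i. i \<in> A \<Longrightarrow> t \<le> v (F i)) \<Longrightarrow> t \<le> v (sum F A)"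
proof (induction A rule: infinite_finite_induct)
  case (insert a A)
  then have "t \<le> min (v (F a)) (v (sum F A))" by auto
  also have "\<dots> \<le> v (F a + sum F A)" by (rule v_add)
  finally show ?case using insert by simp
qed simp_all

lemma v_sum_gt: "t < \<infinity> \<Longrightarrow> (\<And>i. i \<in> A \<Longrightarrow> t < v (F i)) \<Longrightarrow> t < v (sum F A)"
proof (induction A rule: infinite_finite_induct)
  case (insert a A)
  then have "t < min (v (F a)) (v (sum F A))" by auto
  also have "\<dots> \<le> v (F a + sum F A)" by (rule v_add)
  finally show ?case using insert by simp
qed simp_all

abbreviation R where "R \<equiv> val_ring v"

lemma subring_val_ring: "subring R"
  by unfold_locales (auto simp: val_ring_def v_mult intro: order.trans[OF _ v_add])

lemma divide_mem_val_ring_iff: "r \<noteq> 0 \<Longrightarrow> y / r \<in> R \<longleftrightarrow> v r \<le> v y"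
  using v_mult[of "y / r" r] ereal_real_v[of r]
  by (cases "v (y / r)"; cases "v r") (auto simp: val_ring_def simp del: v_eq_infinity_iff)

text \<open>\<open>weighted_val s a i\<close> is the value of the \<open>i\<close>-th coefficient of \<open>a(t X)\<close> for an element \<open>t\<close>
  of value \<open>s\<close>; the least index minimizing it is a vertex of the Newton polygon of \<open>a\<close>.\<close>

definition weighted_val :: "real \<Rightarrow> 'a fps \<Rightarrow> nat \<Rightarrow> ereal" where
  "weighted_val s a i = v (fps_nth a i) + ereal (s * real i)"

lemma weighted_val_finite: "fps_nth a i \<noteq> 0 \<Longrightarrow> \<bar>weighted_val s a i\<bar> \<noteq> \<infinity>"
  by (cases "v (fps_nth a i)") (auto simp: weighted_val_def)

lemma weighted_val_least_minimizer:
  assumes a: "a \<in> fps_ring R" and s: "0 < s" and i0: "fps_nth a i0 \<noteq> 0"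
  obtains k where "\<And>i. weighted_val s a k \<le> weighted_val s a i"
    and "\<And>i. i < k \<Longrightarrow> weighted_val s a k < weighted_val s a i" and "fps_nth a k \<noteq> 0"
proof -
  define c where "c = real_of_ereal (weighted_val s a i0)"
  have c: "weighted_val s a i0 = ereal c"
    using i0 by (cases "v (fps_nth a i0)") (auto simp: c_def weighted_val_def)
  have lower: "ereal (s * real i) \<le> weighted_val s a i" for i
    using a by (auto simp: weighted_val_def fps_ring_def val_ring_def intro: add_increasing)
  have "{i. weighted_val s a i \<le> weighted_val s a i0} \<subseteq> {i. s * real i \<le> c}"
  proof (intro subsetI CollectI)
    fix i assume "i \<in> {i. weighted_val s a i \<le> weighted_val s a i0}"
    then have "weighted_val s a i \<le> ereal c" using c by simp
    from order_trans[OF lower[of i] this] show "s * real i \<le> c" by simp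
  qed
  then have fin: "finite {i. weighted_val s a i \<le> weighted_val s a i0}"
    using finite_nat_linear_le[OF s] by (rule finite_subset)
  obtain k where k: "\<And>i. weighted_val s a k \<le> weighted_val s a i"
    and least: "\<And>i. i < k \<Longrightarrow> weighted_val s a k < weighted_val s a i"
    using exists_least_minimizer[OF fin] by blast
  have "fps_nth a k \<noteq> 0" using k[of i0] c by (auto simp: weighted_val_def)
  then show thesis using that k least by blast
qed

lemma weighted_val_add_less:
  assumes a_min: "\<And>i. weighted_val s a k \<le> weighted_val s a i"
    and a_least: "\<And>i. i < k \<Longrightarrow> weighted_val s a k < weighted_val s a i"
    and c_min: "\<And>j. weighted_val s c n \<le> weighted_val s c j"
    and c_least: "\<And>j. j < n \<Longrightarrow> weighted_val s c n < weighted_val s c j"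
    and ak: "fps_nth a k \<noteq> 0" and cn: "fps_nth c n \<noteq> 0"
    and i: "i \<le> k + n" "i \<noteq> k"
  shows "weighted_val s a k + weighted_val s c n < weighted_val s a i + weighted_val s c (k + n - i)"
proof (cases "i < k")
  case True
  show ?thesis
    by (rule ereal_add_less_le_mono[OF a_least[OF True] c_min
          weighted_val_finite[OF ak] weighted_val_finite[OF cn]])
next
  case False
  then have "k + n - i < n" using i by auto
  have "weighted_val s c n + weighted_val s a k < weighted_val s c (k + n - i) + weighted_val s a i"
    by (rule ereal_add_less_le_mono[OF c_least[OF \<open>k + n - i < n\<close>] a_min
          weighted_val_finite[OF cn] weighted_val_finite[OF ak]])
  then show ?thesis by (simp add: add.commute)
qed

lemma v_mult_nth_at_least_minimizers:
  assumes a_min: "\<And>i. weighted_val s a k \<le> weighted_val s a i"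
    and a_least: "\<And>i. i < k \<Longrightarrow> weighted_val s a k < weighted_val s a i"
    and c_min: "\<And>j. weighted_val s c n \<le> weighted_val s c j"
    and c_least: "\<And>j. j < n \<Longrightarrow> weighted_val s c n < weighted_val s c j"
    and ak: "fps_nth a k \<noteq> 0" and cn: "fps_nth c n \<noteq> 0"
  shows "v (fps_nth (a * c) (k + n)) + ereal (s * real (k + n))
    = weighted_val s a k + weighted_val s c n"
proof -
  define m where "m = k + n"
  define T where "T i = fps_nth a i * fps_nth c (m - i)" for i
  have weighted_T: "v (T i) + ereal (s * real m) = weighted_val s a i + weighted_val s c (m - i)"
    if "i \<le> m" for i
  proof -
    have "ereal (s * real m) = ereal (s * real i) + ereal (s * real (m - i))"
      using that by (simp add: of_nat_diff algebra_simps)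
    then show ?thesis by (simp add: T_def v_mult weighted_val_def ac_simps)
  qed
  have Tk: "\<bar>v (T k)\<bar> \<noteq> \<infinity>"
    using ak cn by (cases "v (fps_nth a k)"; cases "v (fps_nth c n)") (simp_all add: T_def m_def v_mult)
  have "v (T k) < v (T i)" if i: "i \<in> {0..m} - {k}" for i
  proof -
    have "weighted_val s a k + weighted_val s c n < weighted_val s a i + weighted_val s c (m - i)"
      using weighted_val_add_less[OF a_min a_least c_min c_least ak cn] i by (auto simp: m_def)
    then have "v (T k) + ereal (s * real m) < v (T i) + ereal (s * real m)"
      using weighted_T i by (simp add: m_def)
    then show ?thesis using Tk by (cases "v (T k)"; cases "v (T i)") auto
  qed
  then have "v (T k) < v (\<Sum>i\<in>{0..m} - {k}. T i)" using Tk by (intro v_sum_gt) auto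
  moreover have "fps_nth (a * c) m = T k + (\<Sum>i\<in>{0..m} - {k}. T i)"
    unfolding fps_mult_nth T_def by (rule sum.remove) (auto simp: m_def)
  ultimately have "v (fps_nth (a * c) m) = v (T k)" by (simp add: v_add_eq_left)
  then show ?thesis using weighted_T[of k] by (simp add: m_def)
qed

lemma const_coeff_val_bound:
  assumes a: "a \<in> fps_ring R" and c: "c \<in> fps_ring R"
    and t: "\<And>m. t \<le> v (fps_nth (a * c) m)"
  shows "t \<le> v (fps_nth a 0) + v (fps_nth c N)"
proof (rule ccontr)
  assume "\<not> ?thesis"
  then have lt: "v (fps_nth a 0) + v (fps_nth c N) < t" by simp
  then have a0: "fps_nth a 0 \<noteq> 0" and cN: "fps_nth c N \<noteq> 0" by auto
  define \<mu> where "\<mu> = real_of_ereal (v (fps_nth a 0) + v (fps_nth c N))"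
  have \<mu>: "v (fps_nth a 0) + v (fps_nth c N) = ereal \<mu>"
    using a0 cN by (cases "v (fps_nth a 0)"; cases "v (fps_nth c N)") (auto simp: \<mu>_def)
  have "ereal \<mu> < t" using lt \<mu> by simp
  then obtain z where "ereal \<mu> < ereal z" and z: "ereal z < t" using ereal_dense2 by blast
  then have "\<mu> < z" by simp
  txt \<open>For a slope this small, the vertices of the Newton polygons of \<open>a\<close> and \<open>c\<close> lie below
    \<open>v(a\<^sub>0)\<close> and \<open>v(c\<^sub>N) + s N\<close>, and the product coefficient at the sum of the vertices has
    exactly the sum of their weighted values.\<close>
  define s where "s = (z - \<mu>) / (real N + 1)"
  have s: "0 < s" using \<open>\<mu> < z\<close> by (simp add: s_def)
  have "s * real N < s * (real N + 1)" using s by simp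
  then have sN: "\<mu> + s * real N < z" by (simp add: s_def)
  obtain k where k_min: "\<And>i. weighted_val s a k \<le> weighted_val s a i"
    and k_least: "\<And>i. i < k \<Longrightarrow> weighted_val s a k < weighted_val s a i" and ak: "fps_nth a k \<noteq> 0"
    using weighted_val_least_minimizer[OF a s a0] by blast
  obtain n where n_min: "\<And>j. weighted_val s c n \<le> weighted_val s c j"
    and n_least: "\<And>j. j < n \<Longrightarrow> weighted_val s c n < weighted_val s c j" and cn: "fps_nth c n \<noteq> 0"
    using weighted_val_least_minimizer[OF c s cN] by blast
  have "v (fps_nth (a * c) (k + n)) \<le> v (fps_nth (a * c) (k + n)) + ereal (s * real (k + n))"
    using s by (intro add_increasing2) auto
  also have "\<dots> = weighted_val s a k + weighted_val s c n"
    by (rule v_mult_nth_at_least_minimizers[OF k_min k_least n_min n_least ak cn])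
  also have "\<dots> \<le> weighted_val s a 0 + weighted_val s c N"
    using k_min n_min by (rule add_mono)
  also have "\<dots> = ereal (\<mu> + s * real N)"
    using \<mu> by (simp add: weighted_val_def flip: add.assoc)
  also have "\<dots> < ereal z" using sN by simp
  also have "\<dots> < t" by (rule z)
  finally show False using t[of "k + n"] by simp
qed

lemma colon_ideal_val_bound:
  assumes a: "a \<in> colon_ideal (fps_ring R) (fps_const r) f" and f: "f \<in> fps_ring R"
  shows "v r \<le> v (fps_nth a 0) + v (fps_nth f N)"
proof -
  obtain b where "a \<in> fps_ring R" "b \<in> fps_ring R" "a * f = b * fps_const r"
    using a unfolding colon_ideal_def by blast
  moreover have "v r \<le> v (fps_nth b m) + v r" if "b \<in> fps_ring R" for m
    using that by (auto simp: fps_ring_def val_ring_def intro: add_increasing)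
  ultimately show ?thesis using f by (intro const_coeff_val_bound) (auto simp: v_mult)
qed

lemma colon_ideal_const_coeff_gt:
  assumes f: "f \<in> fps_ring R" and r: "r \<noteq> 0"
    and val_f: "\<And>N. v (fps_nth f N) = ereal (\<alpha>s N)" and lim: "\<alpha>s \<longlonglongrightarrow> \<alpha>"
    and \<alpha>: "0 \<le> \<alpha>" and \<alpha>_notin: "\<And>x. x \<in> R \<Longrightarrow> x \<noteq> 0 \<Longrightarrow> v x \<noteq> ereal \<alpha>"
    and a: "a \<in> colon_ideal (fps_ring R) (fps_const r) f"
  shows "v r < v (fps_nth a 0) + ereal \<alpha>"
proof (cases "fps_nth a 0 = 0")
  case True
  then show ?thesis using r by simp
next
  case False
  define \<mu> \<beta> where "\<mu> = real_of_ereal (v (fps_nth a 0))" and "\<beta> = real_of_ereal (v r)"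
  have \<mu>: "v (fps_nth a 0) = ereal \<mu>" and \<beta>: "v r = ereal \<beta>"
    using False r by (simp_all add: \<mu>_def \<beta>_def ereal_real_v)
  have "\<beta> \<le> \<mu> + \<alpha>s N" for N
    using colon_ideal_val_bound[OF a f, of N] \<mu> \<beta> val_f by simp
  then have "\<beta> \<le> \<mu> + \<alpha>" by (intro LIMSEQ_le_const[OF tendsto_add[OF tendsto_const lim]]) auto
  moreover have "\<beta> \<noteq> \<mu> + \<alpha>"
  proof
    assume "\<beta> = \<mu> + \<alpha>"
    then have "v (r / fps_nth a 0) = ereal \<alpha>"
      using v_mult[of "r / fps_nth a 0" "fps_nth a 0"] False \<mu> \<beta>
      by (cases "v (r / fps_nth a 0)") auto
    then show False using \<alpha>_notin[of "r / fps_nth a 0"] \<alpha> False r by (simp add: val_ring_def)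
  qed
  ultimately show ?thesis using \<mu> \<beta> by simp
qed

lemma fps_const_mem_colon_ideal:
  assumes x: "x \<in> R" and r: "r \<noteq> 0" and val: "\<And>n. v r \<le> v x + v (fps_nth f n)"
  shows "fps_const x \<in> colon_ideal (fps_ring R) (fps_const r) f"
proof -
  define b where "b = Abs_fps (\<lambda>n. x * fps_nth f n / r)"
  have "b \<in> fps_ring R" using val r by (simp add: b_def fps_ring_def divide_mem_val_ring_iff v_mult)
  moreover have "fps_const x * f = b * fps_const r" using r by (intro fps_ext) (simp add: b_def)
  moreover have "fps_const x \<in> fps_ring R"
    using subring.fps_const_mem_fps_ring[OF subring_val_ring x] .
  ultimately show ?thesis unfolding colon_ideal_def by blast
qed

lemma span_in_const_coeff_ge:
  assumes h: "\<And>j. j < M \<Longrightarrow> t \<le> v (fps_nth (h j) 0)" and a: "a \<in> span_in (fps_ring R) M h"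
  shows "t \<le> v (fps_nth a 0)"
proof -
  obtain s where s: "\<forall>j<M. s j \<in> fps_ring R" and "a = (\<Sum>j<M. s j * h j)"
    using a unfolding span_in_def by blast
  then have "fps_nth a 0 = (\<Sum>j<M. fps_nth (s j) 0 * fps_nth (h j) 0)"
    by (simp add: fps_sum_nth)
  also have "t \<le> v \<dots>"
  proof (rule v_sum_ge)
    fix j assume "j \<in> {..<M}"
    then have "0 \<le> v (fps_nth (s j) 0)" "t \<le> v (fps_nth (h j) 0)"
      using s h by (auto simp: fps_ring_def val_ring_def)
    then show "t \<le> v (fps_nth (s j) 0 * fps_nth (h j) 0)"
      by (simp add: v_mult add_increasing)
  qed
  finally show ?thesis .
qed

lemma colon_ideal_const_coeff_gap:
  assumes f: "f \<in> fps_ring R" and r: "r \<noteq> 0"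
    and val_f: "\<And>N. v (fps_nth f N) = ereal (\<alpha>s N)" and lim: "\<alpha>s \<longlonglongrightarrow> \<alpha>"
    and \<alpha>: "0 \<le> \<alpha>" and \<alpha>_notin: "\<And>x. x \<in> R \<Longrightarrow> x \<noteq> 0 \<Longrightarrow> v x \<noteq> ereal \<alpha>"
    and fin: "fin_gen_ideal (fps_ring R) (colon_ideal (fps_ring R) (fps_const r) f)"
  obtains z where "v r < ereal z"
    and "\<And>a. a \<in> colon_ideal (fps_ring R) (fps_const r) f \<Longrightarrow> ereal (z - \<alpha>) \<le> v (fps_nth a 0)"
proof -
  obtain M h where colon_eq: "colon_ideal (fps_ring R) (fps_const r) f = span_in (fps_ring R) M h"
    using fin unfolding fin_gen_ideal_def by blast
  let ?A = "(\<lambda>j. v (fps_nth (h j) 0) + ereal \<alpha>) ` {..<M}"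
  have "v r < y" if "y \<in> ?A" for y
  proof -
    obtain j where j: "j < M" and y: "y = v (fps_nth (h j) 0) + ereal \<alpha>" using \<open>y \<in> ?A\<close> by blast
    have "h j \<in> colon_ideal (fps_ring R) (fps_const r) f"
      unfolding colon_eq by (rule subring.span_in_generator[OF subring.subring_fps_ring[OF subring_val_ring] j])
    from colon_ideal_const_coeff_gt[OF f r val_f lim \<alpha> \<alpha>_notin this] show ?thesis by (simp add: y)
  qed
  moreover have "v r < \<infinity>" using r by simp
  ultimately obtain z where z: "v r < ereal z" and z_le: "\<And>y. y \<in> ?A \<Longrightarrow> ereal z \<le> y"
    using ereal_between_finite[of ?A "v r"] by blast
  have bound: "ereal (z - \<alpha>) \<le> v (fps_nth (h j) 0)" if "j < M" for j
  proof -
    have "ereal z \<le> v (fps_nth (h j) 0) + ereal \<alpha>" using that by (intro z_le) blast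
    then show ?thesis by (cases "v (fps_nth (h j) 0)") auto
  qed
  show thesis
  proof (rule that[OF z])
    fix a assume "a \<in> colon_ideal (fps_ring R) (fps_const r) f"
    then show "ereal (z - \<alpha>) \<le> v (fps_nth a 0)"
      unfolding colon_eq by (rule span_in_const_coeff_ge[rotated]) (rule bound)
  qed
qed

lemma colon_ideal_not_fin_gen:
  assumes dense: "dense_in_reals (value_group v)"
    and f: "f \<in> fps_ring R" and r: "r \<noteq> 0" and r_val: "ereal \<alpha> < v r"
    and val_f: "\<And>N. v (fps_nth f N) = ereal (\<alpha>s N)" and lim: "\<alpha>s \<longlonglongrightarrow> \<alpha>"
    and above: "\<And>N. \<alpha> < \<alpha>s N"
    and \<alpha>: "0 \<le> \<alpha>" and \<alpha>_notin: "\<And>x. x \<in> R \<Longrightarrow> x \<noteq> 0 \<Longrightarrow> v x \<noteq> ereal \<alpha>"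
  shows "\<not> fin_gen_ideal (fps_ring R) (colon_ideal (fps_ring R) (fps_const r) f)"
proof
  assume "fin_gen_ideal (fps_ring R) (colon_ideal (fps_ring R) (fps_const r) f)"
  then obtain z where z: "v r < ereal z"
    and gap: "\<And>a. a \<in> colon_ideal (fps_ring R) (fps_const r) f \<Longrightarrow> ereal (z - \<alpha>) \<le> v (fps_nth a 0)"
    using colon_ideal_const_coeff_gap[OF f r val_f lim \<alpha> \<alpha>_notin] by blast
  define \<beta> where "\<beta> = real_of_ereal (v r)"
  have \<beta>: "v r = ereal \<beta>" using r by (simp add: \<beta>_def ereal_real_v)
  have "\<alpha> < \<beta>" "\<beta> - \<alpha> < z - \<alpha>" using r_val z \<beta> by simp_all
  then obtain g where "g \<in> value_group v" and g_gt: "\<beta> - \<alpha> < g" and g_lt: "g < z - \<alpha>"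
    using dense unfolding dense_in_reals_def by blast
  then obtain x where x: "x \<noteq> 0" and gx: "g = real_of_ereal (v x)"
    unfolding value_group_def by blast
  have vx: "v x = ereal g" using ereal_real_v[OF x] gx by simp
  have "fps_const x \<in> colon_ideal (fps_ring R) (fps_const r) f"
  proof (rule fps_const_mem_colon_ideal[OF _ r])
    show "x \<in> R" using g_gt \<open>\<alpha> < \<beta>\<close> vx by (simp add: val_ring_def)
    show "v r \<le> v x + v (fps_nth f n)" for n
      using g_gt above[of n] by (simp add: \<beta> vx val_f)
  qed
  from gap[OF this] show False using g_lt vx by simp
qed

end

theorem theoremB:
  fixes v :: "'a::field \<Rightarrow> ereal"
    and \<alpha> :: real and \<alpha>s :: "nat \<Rightarrow> real" and rs :: "nat \<Rightarrow> 'a" and r :: 'a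
  assumes val: "is_valuation v"
    and dense: "dense_in_reals (value_group v)"
    and proper: "value_group v \<noteq> UNIV"
    and alpha_nonneg: "0 \<le> \<alpha>"
    and alpha_notin: "\<forall>x\<in>val_ring v. x \<noteq> 0 \<longrightarrow> v x \<noteq> ereal \<alpha>"
    and alphas_in: "\<forall>n. \<exists>x\<in>val_ring v. x \<noteq> 0 \<and> v x = ereal (\<alpha>s n)"
    and alphas_mono: "\<forall>n. \<alpha>s n \<ge> \<alpha>s (Suc n) \<and> \<alpha>s (Suc n) > \<alpha>"
    and alphas_lim: "\<alpha>s \<longlonglongrightarrow> \<alpha>"
    and rs_R: "\<forall>n. rs n \<in> val_ring v"
    and rs_val: "\<forall>n. v (rs n) = ereal (\<alpha>s n)"
    and r_R: "r \<in> val_ring v"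
    and r_nz: "r \<noteq> 0"
    and r_val: "v r > ereal \<alpha>"
  shows "\<not> finitely_presented_ideal (fps_ring (val_ring v))
            {g * Abs_fps rs + h * fps_const r | g h.
               g \<in> fps_ring (val_ring v) \<and> h \<in> fps_ring (val_ring v)}
         \<and> \<not> coherent_ring (fps_ring (val_ring v))"
proof -
  \<comment> \<open>\<open>proper\<close> and \<open>alphas_in\<close> only guarantee that such \<open>\<alpha>\<close> and \<open>\<alpha>s\<close> exist.\<close>
  interpret valuation v by (rule valuation.intro) (rule val)
  interpret S: subring "fps_ring R" by (rule subring.subring_fps_ring[OF subring_val_ring])
  have f: "Abs_fps rs \<in> fps_ring R" using rs_R by (simp add: fps_ring_def)
  have r: "fps_const r \<in> fps_ring R" by (rule subring.fps_const_mem_fps_ring[OF subring_val_ring r_R])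
  have above: "\<alpha> < \<alpha>s n" for n using alphas_mono by (meson less_le_trans)
  have val_f: "v (fps_nth (Abs_fps rs) N) = ereal (\<alpha>s N)" for N using rs_val by simp
  have notin: "\<And>x. x \<in> R \<Longrightarrow> x \<noteq> 0 \<Longrightarrow> v x \<noteq> ereal \<alpha>" using alpha_notin by blast
  have "\<not> fin_gen_ideal (fps_ring R) (colon_ideal (fps_ring R) (fps_const r) (Abs_fps rs))"
    by (rule colon_ideal_not_fin_gen[OF dense f r_nz r_val val_f alphas_lim above alpha_nonneg notin])
  then have "\<not> finitely_presented_ideal (fps_ring R)
      {g * Abs_fps rs + h * fps_const r | g h. g \<in> fps_ring R \<and> h \<in> fps_ring R}"
    using S.fin_gen_colon_ideal_if_finitely_presented[OF f r] by blast
  then show ?thesis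
    using S.fin_gen_ideal_two_generators[OF f r] unfolding coherent_ring_def by blast
qed

end
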